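(* Let $N\ge2$ and $(b,a)\in\mathcal{M}=\mathbb{R}^N\times\mathbb{R}_{>0}^N$. Then for all $\lambda$ and both choices of sign, \[ \Delta_\lambda(S(b,a))\mp2=(-1)^N\Delta_{-\lambda}(b,a)\mp2, \] and consequently $\dot\Delta_\lambda(S(b,a))=(-1)^{N+1}\dot\Delta_{-\lambda}(b,a)$, where $\dot\Delta_\lambda=\partial_\lambda\Delta_\lambda$, and $\Delta_\lambda^2(S(b,a))-4=\Delta_{-\lambda}^2(b,a)-4$.
   Context: Indices of $(b,a)$ are mod $N$; $S(b,a)=(b',a')$ with $b'_j=-b_{N-j}$, $a'_j=a_{N-j-1}$. For $(b,a)\in\mathcal{M}$, let $y_1(k,\lambda),y_2(k,\lambda)$ be the solutions of $a_{k-1}y(k-1)+b_ky(k)+a_ky(k+1)=\lambda y(k)$ ($k\in\mathbb{Z}$) with $y_1(0)=1,y_1(1)=0,y_2(0)=0,y_2(1)=1$; the discriminant is $\Delta_\lambda(b,a)=y_1(N,\lambda)+y_2(N+1,\lambda)$, a polynomial in $\lambda$ of degree $N$. *)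

theory Defs
  imports "HOL-Analysis.Analysis"
begin

text \<open>A point (b,a) of M = R^N x R_{>0}^N is represented by two functions
  b a :: nat => real; only the values at indices 0..N-1 matter, all indices
  are read mod N.\<close>

text \<open>Solution of a_{k-1} y(k-1) + b_k y(k) + a_k y(k+1) = lam y(k) with
  y(0) = u0, y(1) = u1, computed forward for k >= 0 (a_k > 0, so it is
  uniquely determined).\<close>
fun jsol :: "nat \<Rightarrow> (nat \<Rightarrow> real) \<Rightarrow> (nat \<Rightarrow> real) \<Rightarrow> complex \<Rightarrow> complex \<Rightarrow> complex \<Rightarrow> nat \<Rightarrow> complex" where
  "jsol N b a u0 u1 lam 0 = u0"
| "jsol N b a u0 u1 lam (Suc 0) = u1"
| "jsol N b a u0 u1 lam (Suc (Suc k)) =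
     ((lam - of_real (b (Suc k mod N))) * jsol N b a u0 u1 lam (Suc k)
       - of_real (a (k mod N)) * jsol N b a u0 u1 lam k) / of_real (a (Suc k mod N))"

definition discr :: "nat \<Rightarrow> (nat \<Rightarrow> real) \<Rightarrow> (nat \<Rightarrow> real) \<Rightarrow> complex \<Rightarrow> complex" where
  "discr N b a lam = jsol N b a 1 0 lam N + jsol N b a 0 1 lam (N + 1)"

definition Sb :: "nat \<Rightarrow> (nat \<Rightarrow> real) \<Rightarrow> nat \<Rightarrow> real" where
  "Sb N b j = - b ((N - j mod N) mod N)"

definition Sa :: "nat \<Rightarrow> (nat \<Rightarrow> real) \<Rightarrow> nat \<Rightarrow> real" where
  "Sa N a j = a ((N - j mod N - 1) mod N)"

end

theory Submission
  imports Defs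
begin

text \<open>The recurrence is encoded by the transfer matrices
  T_k(lam) = [[0, 1], [-a_k / a_(k+1), (lam - b_(k+1)) / a_(k+1)]], and Delta_lam is the trace
  of the monodromy T_(N-1) ... T_0. For S(b,a) the k-th transfer matrix at lam is the scalar
  -a'_k / a'_(k+1) times the transpose of the original transfer matrix at the mirrored step
  2N-2-k and at -lam. The scalars telescope to (-1)^N; transposing reverses the order of the
  product, and the resulting cyclic shift of the monodromy does not change its trace.\<close>

lemma matrix_mul_mat_left: "mat c ** A = (\<chi> i j. c * A $ i $ j :: 'a::semiring_1^'n^'m)"
  by (simp add: vec_eq_iff matrix_matrix_mult_def mat_def if_distrib if_distribR sum.delta
      cong del: if_weak_cong)

lemma matrix_mul_mat_right: "A ** mat c = (\<chi> i j. A $ i $ j * c :: 'a::semiring_1^'n^'m)"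
  by (simp add: vec_eq_iff matrix_matrix_mult_def mat_def if_distrib if_distribR sum.delta'
      cong del: if_weak_cong)

lemma matrix_mul_mat_mat: "mat c ** mat d = (mat (c * d) :: 'a::semiring_1^'n^'n)"
  unfolding matrix_mul_mat_left by (simp add: vec_eq_iff mat_def)

lemma matrix_mul_mat_commute: "(A :: 'a::comm_semiring_1^'n^'n) ** mat c = mat c ** A"
  unfolding matrix_mul_mat_left matrix_mul_mat_right by (simp add: mult.commute)

lemma trace_mat_mul: "trace (mat c ** A) = c * trace (A :: 'a::comm_semiring_1^'n^'n)"
  unfolding matrix_mul_mat_left by (simp add: trace_def sum_distrib_left)

lemma trace_transpose: "trace (transpose A) = trace A"
  by (simp add: trace_def transpose_def)

fun mat_lprod :: "(nat \<Rightarrow> 'a::semiring_1^'n^'n) \<Rightarrow> nat \<Rightarrow> 'a^'n^'n" where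
  "mat_lprod F 0 = mat 1"
| "mat_lprod F (Suc n) = F n ** mat_lprod F n"

lemma mat_lprod_cong: "(\<And>k. k < n \<Longrightarrow> F k = G k) \<Longrightarrow> mat_lprod F n = mat_lprod G n"
  by (induction n) auto

lemma mat_lprod_Suc_shift: "mat_lprod F (Suc n) = mat_lprod (\<lambda>k. F (Suc k)) n ** F 0"
proof (induction n)
  case 0
  then show ?case by simp
next
  case (Suc n)
  then show ?case by (simp only: mat_lprod.simps matrix_mul_assoc)
qed

lemma transpose_mat_lprod:
  "transpose (mat_lprod F n :: 'a::comm_semiring_1^'n^'n)
    = mat_lprod (\<lambda>k. transpose (F (n - Suc k))) n"
proof (induction n)
  case 0
  then show ?case by simp
next
  case (Suc n)
  have "transpose (mat_lprod F (Suc n))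
      = mat_lprod (\<lambda>k. transpose (F (n - Suc k))) n ** transpose (F n)"
    by (simp add: matrix_transpose_mul Suc.IH)
  then show ?case by (simp only: mat_lprod_Suc_shift) simp
qed

lemma mat_lprod_mat_mul:
  "mat_lprod (\<lambda>k. mat (c k) ** F k) n
    = mat (\<Prod>k<n. c k) ** (mat_lprod F n :: 'a::comm_semiring_1^'n^'n)"
proof (induction n)
  case 0
  then show ?case by simp
next
  case (Suc n)
  have "mat_lprod (\<lambda>k. mat (c k) ** F k) (Suc n)
      = mat (c n) ** (F n ** mat (\<Prod>k<n. c k)) ** mat_lprod F n"
    by (simp only: mat_lprod.simps Suc.IH matrix_mul_assoc)
  also have "\<dots> = mat (c n * (\<Prod>k<n. c k)) ** (F n ** mat_lprod F n)"
    by (simp only: matrix_mul_mat_commute[of "F n"] matrix_mul_mat_mat matrix_mul_assoc)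
  finally show ?case by (simp add: mult.commute)
qed

lemma trace_mat_lprod_shift:
  fixes F :: "nat \<Rightarrow> 'a::comm_semiring_1^'n^'n"
  assumes periodic: "\<And>k. F (k + N) = F k"
  shows "trace (mat_lprod (\<lambda>k. F (k + m)) N) = trace (mat_lprod F N)"
proof (induction m)
  case 0
  then show ?case by simp
next
  case (Suc m)
  show ?case
  proof (cases N)
    case 0
    then show ?thesis by simp
  next
    case N: (Suc n)
    let ?X = "mat_lprod (\<lambda>k. F (k + Suc m)) n"
    have "mat_lprod (\<lambda>k. F (k + m)) N = ?X ** F m"
      by (simp only: N mat_lprod_Suc_shift) (simp add: add.commute)
    moreover have "mat_lprod (\<lambda>k. F (k + Suc m)) N = F m ** ?X"
      using periodic[of m] by (simp add: N add.commute)
    ultimately show ?thesis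
      using Suc.IH trace_mul_sym[of ?X "F m"] by simp
  qed
qed

definition transfer ::
    "nat \<Rightarrow> (nat \<Rightarrow> real) \<Rightarrow> (nat \<Rightarrow> real) \<Rightarrow> complex \<Rightarrow> nat \<Rightarrow> complex^2^2" where
  "transfer N b a lam k = vector [vector [0, 1],
     vector [- of_real (a (k mod N)) / of_real (a (Suc k mod N)),
             (lam - of_real (b (Suc k mod N))) / of_real (a (Suc k mod N))]]"

lemma transfer_periodic: "transfer N b a lam (k + N) = transfer N b a lam k"
  unfolding transfer_def add_Suc[symmetric] mod_add_self2 ..

lemma jsol_eq_mat_lprod_transfer:
  "mat_lprod (transfer N b a lam) n *v vector [u0, u1]
     = vector [jsol N b a u0 u1 lam n, jsol N b a u0 u1 lam (Suc n)]"
proof (induction n)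
  case 0
  then show ?case by simp
next
  case (Suc n)
  have "mat_lprod (transfer N b a lam) (Suc n) *v vector [u0, u1]
      = transfer N b a lam n *v vector [jsol N b a u0 u1 lam n, jsol N b a u0 u1 lam (Suc n)]"
    by (simp add: matrix_vector_mul_assoc[symmetric] Suc.IH)
  also have "\<dots> = vector [jsol N b a u0 u1 lam (Suc n), jsol N b a u0 u1 lam (Suc (Suc n))]"
    by (simp add: transfer_def vec_eq_iff forall_2 matrix_vector_mult_def sum_2
        diff_divide_distrib add_divide_distrib algebra_simps)
  finally show ?case .
qed

lemma discr_eq_trace: "discr N b a lam = trace (mat_lprod (transfer N b a lam) N)"
proof -
  let ?M = "mat_lprod (transfer N b a lam) N"
  have "jsol N b a 1 0 lam N = ?M $ 1 $ 1"
    using arg_cong[where f="\<lambda>v. v $ 1", OF jsol_eq_mat_lprod_transfer[of N b a lam N 1 0]]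
    by (simp add: matrix_vector_mult_def sum_2)
  moreover have "jsol N b a 0 1 lam (N + 1) = ?M $ 2 $ 2"
    using arg_cong[where f="\<lambda>v. v $ 2", OF jsol_eq_mat_lprod_transfer[of N b a lam N 0 1]]
    by (simp add: matrix_vector_mult_def sum_2)
  ultimately show ?thesis by (simp add: discr_def trace_def sum_2)
qed

lemma Sa_Sb_mirror:
  assumes "k < N"
  shows "Sa N a (k mod N) = a (Suc (2 * N - 2 - k) mod N)"
    and "Sa N a (Suc k mod N) = a ((2 * N - 2 - k) mod N)"
    and "Sb N b (Suc k mod N) = - b (Suc (2 * N - 2 - k) mod N)"
  using assms by (auto simp: Sa_def Sb_def mod_if Suc_diff_Suc intro!: arg_cong[where f=a])

lemma transfer_Sb_Sa:
  assumes "\<forall>j<N. a j \<noteq> 0" and "k < N"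
  shows "transfer N (Sb N b) (Sa N a) lam k
    = mat (- (of_real (Sa N a (k mod N)) / of_real (Sa N a (Suc k mod N))))
      ** transpose (transfer N b a (- lam) (2 * N - 2 - k))"
proof -
  have "a (j mod N) \<noteq> 0" for j
    using assms by simp
  then show ?thesis
    unfolding transfer_def Sa_Sb_mirror[OF assms(2)]
    by (simp add: vec_eq_iff forall_2 matrix_matrix_mult_def sum_2 mat_def transpose_def
        field_simps)
qed

lemma discr_Sb_Sa:
  assumes "0 < N" and "\<forall>j<N. a j \<noteq> 0"
  shows "discr N (Sb N b) (Sa N a) lam = (-1) ^ N * discr N b a (- lam)"
proof -
  let ?T = "transfer N b a (- lam)"
  define x where "x k = (of_real (Sa N a (k mod N)) :: complex)" for k
  have x_nonzero: "x k \<noteq> 0" for k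
    using assms by (simp add: x_def Sa_def)
  have "(\<Prod>k<N. x k / x (Suc k)) = x 0 / x N"
    by (rule prod_lessThan_telescope') (rule x_nonzero)
  moreover have "x N = x 0"
    by (simp add: x_def)
  ultimately have scalars: "(\<Prod>k<N. - (x k / x (Suc k))) = (-1) ^ N"
    by (simp add: prod_uminus x_nonzero)
  have "discr N (Sb N b) (Sa N a) lam
      = trace (mat_lprod (\<lambda>k. mat (- (x k / x (Suc k))) ** transpose (?T (2 * N - 2 - k))) N)"
    unfolding discr_eq_trace x_def using assms(2)
    by (simp add: transfer_Sb_Sa cong: mat_lprod_cong)
  also have "\<dots> = (-1) ^ N * trace (mat_lprod (\<lambda>k. transpose (?T (2 * N - 2 - k))) N)"
    by (simp add: mat_lprod_mat_mul trace_mat_mul scalars)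
  also have "mat_lprod (\<lambda>k. transpose (?T (2 * N - 2 - k))) N
      = transpose (mat_lprod (\<lambda>k. ?T (k + (N - 1))) N)"
    unfolding transpose_mat_lprod
  proof (rule mat_lprod_cong)
    fix k assume "k < N"
    then have "2 * N - 2 - k = N - Suc k + (N - 1)" by simp
    then show "transpose (?T (2 * N - 2 - k)) = transpose (?T (N - Suc k + (N - 1)))" by simp
  qed
  also have "trace \<dots> = discr N b a (- lam)"
    by (simp add: trace_transpose trace_mat_lprod_shift transfer_periodic discr_eq_trace)
  finally show ?thesis .
qed

lemma jsol_field_differentiable:
  "(\<lambda>lam. jsol N b a u0 u1 lam n) field_differentiable at z"
proof (induction n rule: induct_nat_012)
  case (ge2 n)
  then show ?case
    by (auto simp: divide_inverse intro!: field_differentiable_mult field_differentiable_diff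
        field_differentiable_const field_differentiable_ident)
qed simp_all

lemma discr_field_differentiable: "discr N b a field_differentiable at z"
  unfolding discr_def[abs_def]
  by (intro field_differentiable_add jsol_field_differentiable)

lemma deriv_mult_reflect:
  fixes g :: "complex \<Rightarrow> complex"
  assumes "g field_differentiable at (- z)"
  shows "deriv (\<lambda>w. c * g (- w)) z = - c * deriv g (- z)"
proof -
  have "(g \<circ> uminus) field_differentiable at z"
    using assms by (intro field_differentiable_compose) (auto intro: field_differentiable_minus)
  moreover have "deriv (g \<circ> uminus) z = - deriv g (- z)"
    using assms by (subst deriv_chain) (auto intro: field_differentiable_minus)
  ultimately show ?thesis
    using deriv_cmult[of "g \<circ> uminus" z c] by (simp add: comp_def)
qed

theorem corollary2p4:
  fixes N :: nat and b a :: "nat \<Rightarrow> real"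
  assumes "N \<ge> 2" and "\<forall>j<N. a j > 0"
  shows "(\<forall>lam. discr N (Sb N b) (Sa N a) lam - 2 = (-1) ^ N * discr N b a (- lam) - 2
              \<and> discr N (Sb N b) (Sa N a) lam + 2 = (-1) ^ N * discr N b a (- lam) + 2)
       \<and> (\<forall>lam. deriv (discr N (Sb N b) (Sa N a)) lam = (-1) ^ (N + 1) * deriv (discr N b a) (- lam))
       \<and> (\<forall>lam. (discr N (Sb N b) (Sa N a) lam)\<^sup>2 - 4 = (discr N b a (- lam))\<^sup>2 - 4)"
proof -
  have reflect: "discr N (Sb N b) (Sa N a) = (\<lambda>lam. (-1) ^ N * discr N b a (- lam))"
    using assms by (intro ext discr_Sb_Sa) auto
  have "deriv (discr N (Sb N b) (Sa N a)) lam = (-1) ^ (N + 1) * deriv (discr N b a) (- lam)"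
    for lam
    unfolding reflect by (simp add: deriv_mult_reflect discr_field_differentiable)
  moreover have "((-1 :: complex) ^ N)\<^sup>2 = 1"
    by (simp flip: power_mult)
  ultimately show ?thesis
    by (simp add: reflect power_mult_distrib)
qed

end
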